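(* Let $k\ge1$, let $U\subseteq\mathbb{R}^n$ be a domain, and let $f:U\times\mathbb{R}^n\to Cl_n$ be such that for each $x\in U$ the function $u\mapsto f(x,u)$ is a $Cl_n$-valued harmonic polynomial homogeneous of degree $k$. For $y\in\mathbb{R}^n\setminus\{0\}$ with $y^{-1}\in U$ and $w\in\mathbb{R}^n$, put $x=y^{-1}$ and $u=\frac{ywy}{\|y\|^2}$. Then $$P_{k,w}\Big[\frac{y}{\|y\|^n}f\Big(y^{-1},\frac{ywy}{\|y\|^2}\Big)\Big]=\frac{y}{\|y\|^n}\big(P_{k,u}f\big)(x,u)\Big|_{x=y^{-1},\ u=ywy/\|y\|^2}.$$
   Context: $Cl_n$ is the real Clifford algebra generated by an orthonormal basis $e_1,\dots,e_n$ of $\mathbb{R}^n\subseteq Cl_n$ with $e_ie_j+e_je_i=-2\delta_{ij}$; for a nonzero vector $y$, $y^{-1}=-y/\|y\|^2$. The Dirac operator in the variable $u$ is $D_u=\sum_{j=1}^n e_j\partial_{u_j}$. $\mathcal M_k$ denotes the space of $Cl_n$-valued polynomials $p(u)$ on $\mathbb{R}^n$, homogeneous of degree $k$, with $D_up=0$ (left monogenic). Every $Cl_n$-valued harmonic polynomial $h$ homogeneous of degree $k$ in $u$ decomposes uniquely as $h(u)=p_k(u)+u\,p_{k-1}(u)$ with $p_k\in\mathcal M_k$, $p_{k-1}\in\mathcal M_{k-1}$ (Almansi–Fischer decomposition); the projection $P_k$ is defined by $P_kh=p_k$, and explicitly $P_k=1+\frac{uD_u}{n+2k-2}$. A subscript,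 as in $P_{k,u}$, indicates the variable in which the projection acts. *)

theory Defs
  imports "HOL-Analysis.Analysis"
begin

text \<open>Real Clifford algebra Cl_n with n = CARD('n). Elements are real coefficient
vectors indexed by basis blades e_A, A a subset of the index type 'n (ordered by
the linear order of 'n). Generators satisfy e_i e_j + e_j e_i = -2 delta_ij.\<close>

type_synonym 'n cl = "real ^ ('n set)"

definition blade_sign :: "'n::{finite,linorder} set \<Rightarrow> 'n set \<Rightarrow> real" where
  "blade_sign A B = (-1) ^ (card {(a, b). a \<in> A \<and> b \<in> B \<and> b < a} + card (A \<inter> B))"

definition cl_mult :: "'n::{finite,linorder} cl \<Rightarrow> 'n cl \<Rightarrow> 'n cl" (infixl "\<odot>" 70) where
  "cl_mult a b = (\<chi> C. \<Sum>A\<in>UNIV. \<Sum>B\<in>UNIV.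
      if (A - B) \<union> (B - A) = C then blade_sign A B * (a $ A) * (b $ B) else 0)"

definition cl_e :: "'n::{finite,linorder} \<Rightarrow> 'n cl" where
  "cl_e i = axis {i} 1"

definition vec_cl :: "real ^ 'n::{finite,linorder} \<Rightarrow> 'n cl" where
  "vec_cl x = (\<Sum>i\<in>UNIV. (x $ i) *\<^sub>R cl_e i)"

definition cl_vec :: "'n::{finite,linorder} cl \<Rightarrow> real ^ ('n::{finite,linorder})" where
  "cl_vec a = (\<chi> i. a $ {i})"

definition vinv :: "real ^ 'n::{finite,linorder} \<Rightarrow> real ^ ('n::{finite,linorder})" where
  "vinv y = - (inverse (norm y ^ 2)) *\<^sub>R y"

definition pd :: "'n::{finite,linorder} \<Rightarrow> (real ^ ('n::{finite,linorder}) \<Rightarrow> 'n cl) \<Rightarrow> real ^ ('n::{finite,linorder}) \<Rightarrow> 'n cl" where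
  "pd j g u = vector_derivative (\<lambda>t. g (u + t *\<^sub>R axis j 1)) (at 0)"

definition dirac :: "(real ^ 'n::{finite,linorder} \<Rightarrow> 'n cl) \<Rightarrow> real ^ ('n::{finite,linorder}) \<Rightarrow> 'n cl" where
  "dirac g u = (\<Sum>j\<in>UNIV. cl_e j \<odot> pd j g u)"

definition hom_poly :: "nat \<Rightarrow> (real ^ 'n::{finite,linorder} \<Rightarrow> 'n cl) \<Rightarrow> bool" where
  "hom_poly k g \<longleftrightarrow> (\<exists>c :: ('n \<Rightarrow> nat) \<Rightarrow> 'n cl.
     g = (\<lambda>u. \<Sum>\<alpha>\<in>{\<alpha>. sum \<alpha> UNIV = k}. (\<Prod>i\<in>UNIV. (u $ i) ^ (\<alpha> i)) *\<^sub>R c \<alpha>))"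

definition harmonic_hom_poly :: "nat \<Rightarrow> (real ^ 'n::{finite,linorder} \<Rightarrow> 'n cl) \<Rightarrow> bool" where
  "harmonic_hom_poly k g \<longleftrightarrow> hom_poly k g \<and> (\<forall>u. (\<Sum>j\<in>UNIV. pd j (pd j g) u) = 0)"

definition Pk :: "nat \<Rightarrow> (real ^ 'n::{finite,linorder} \<Rightarrow> 'n cl) \<Rightarrow> real ^ ('n::{finite,linorder}) \<Rightarrow> 'n cl" where
  "Pk k g u = g u + inverse (real CARD('n) + 2 * real k - 2) *\<^sub>R (vec_cl u \<odot> dirac g u)"

end

theory Submission
  imports Defs
begin

(* Reflections intertwine the projection P_k.

   For y \<noteq> 0 the Clifford sandwich  w \<mapsto> y w y / |y|^2  is the reflection
   A_y(w) = w - 2<w,y>/|y|^2 y  in the hyperplane orthogonal to y.  Writing c = a y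
   (a any real scalar), the key identities are the intertwining relations
       A_y(z) y = - y z        and        y A_y(z) = - z y,
   both consequences of the anticommutation rule  a b + b a = -2<a,b>.
   Since A_y is linear and symmetric, the chain rule gives for every g differentiable at A_y(w)
       D_w [c g(A_y w)] = - c (D_u g)(A_y w),
   and then  w D_w [c g(A_y w)] = c A_y(w) (D_u g)(A_y w),  so that
       P_{k,w} [c g(A_y w)] = c (P_{k,u} g)(A_y w).
   The theorem is the case c = y/|y|^n, g = f(y^{-1}, -); a homogeneous polynomial is
   differentiable, which is all that is used of the hypotheses on f. *)

section \<open>Clifford multiplication is bilinear and associative\<close>

lemma cl_mult_nth:
  "(a \<odot> b) $ C = (\<Sum>A\<in>UNIV. \<Sum>B\<in>UNIV.
      (if (A - B) \<union> (B - A) = C then blade_sign A B else 0) * (a $ A) * (b $ B))"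
  by (simp add: cl_mult_def if_distrib[where f="\<lambda>x. x * _"] cong: if_cong)

lemma cl_mult_bilinear: "bilinear (cl_mult :: 'n::{finite,linorder} cl \<Rightarrow> _)"
  unfolding bilinear_def
  by (auto intro!: linearI simp: vec_eq_iff cl_mult_nth sum.distrib sum_distrib_left algebra_simps)

(* Bilinearity in finite dimension gives all the distributive laws (sum_left, scaleR_right,
   minus_left, ...) and the boundedness needed for the chain rule. *)
interpretation cl: bounded_bilinear "cl_mult :: 'n::{finite,linorder} cl \<Rightarrow> _"
  using cl_mult_bilinear by (simp add: bilinear_conv_bounded_bilinear)

lemma basis_expansion_real: "(\<Sum>i\<in>UNIV. (x $ i) *\<^sub>R axis i (1::real)) = x"
  using basis_expansion[of x] by (simp add: scalar_mult_eq_scaleR)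

lemma cl_axis_mult:
  "axis A a \<odot> axis B b = axis ((A - B) \<union> (B - A)) (blade_sign A B * a * b)"
proof -
  have "(axis A a \<odot> axis B b) $ C = (if (A - B) \<union> (B - A) = C then blade_sign A B * a * b else 0)" for C
  proof -
    have "(if (A' - B') \<union> (B' - A') = C then blade_sign A' B' else 0) * (axis A a $ A') * (axis B b $ B')
        = (if B' = B then if A' = A then (if (A - B) \<union> (B - A) = C then blade_sign A B * a * b else 0)
           else 0 else 0)" for A' B'
      by (simp add: axis_def)
    then show ?thesis by (simp only: cl_mult_nth sum.delta finite UNIV_I if_True)
  qed
  then show ?thesis by (simp add: vec_eq_iff axis_def eq_commute)
qed

(* The sign contributed by the ordered pair of generators e_a, e_b when moving e_b
   past e_a: -1 if b \<le> a (an inversion, or the square e_a e_a = -1), else +1. *)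
definition pair_sign :: "'n::linorder \<Rightarrow> 'n \<Rightarrow> real" where
  "pair_sign a b = (if b \<le> a then -1 else 1)"

(* blade_sign counts inversions plus common elements; as a product over pairs it becomes
   visibly multiplicative in each argument. *)
lemma blade_sign_prod:
  fixes A B :: "'n::{finite,linorder} set"
  shows "blade_sign A B = (\<Prod>a\<in>A. \<Prod>b\<in>B. pair_sign a b)"
proof -
  define Inv where "Inv = {(a, b). a \<in> A \<and> b \<in> B \<and> b < a}"
  define Diag where "Diag = (\<lambda>a. (a, a)) ` (A \<inter> B)"
  have card_diag: "card Diag = card (A \<inter> B)"
    unfolding Diag_def by (rule card_image) (auto simp: inj_on_def)
  have le_pairs: "(A \<times> B) \<inter> {p. snd p \<le> fst p} = Inv \<union> Diag" "Inv \<inter> Diag = {}"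
    unfolding Inv_def Diag_def by auto
  have "(\<Prod>a\<in>A. \<Prod>b\<in>B. pair_sign a b) = (\<Prod>p\<in>A \<times> B. if snd p \<le> fst p then -1 else 1)"
    unfolding prod.cartesian_product pair_sign_def by (simp add: case_prod_beta)
  also have "\<dots> = (-1) ^ card ((A \<times> B) \<inter> {p. snd p \<le> fst p})"
    by (simp add: prod.If_cases)
  also have "\<dots> = (-1) ^ (card Inv + card (A \<inter> B))"
    unfolding le_pairs(1) by (simp add: card_Un_disjoint le_pairs(2) card_diag)
  finally show ?thesis unfolding blade_sign_def Inv_def by simp
qed

(* A product of \<plusminus>1 factors over a symmetric difference: the common part cancels. *)
lemma prod_sym_diff:
  fixes f :: "'a \<Rightarrow> real"
  assumes "finite X" "finite Y" "\<And>x. f x * f x = 1"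
  shows "(\<Prod>x\<in>(X - Y) \<union> (Y - X). f x) = (\<Prod>x\<in>X. f x) * (\<Prod>x\<in>Y. f x)"
proof -
  have split_X: "(\<Prod>x\<in>X. f x) = (\<Prod>x\<in>X - Y. f x) * (\<Prod>x\<in>X \<inter> Y. f x)"
    using prod.Int_Diff[OF assms(1), of f Y] by (simp add: mult.commute)
  have split_Y: "(\<Prod>x\<in>Y. f x) = (\<Prod>x\<in>Y - X. f x) * (\<Prod>x\<in>X \<inter> Y. f x)"
    using prod.Int_Diff[OF assms(2), of f X] by (simp add: mult.commute Int_commute)
  have common_sq: "(\<Prod>x\<in>X \<inter> Y. f x) * (\<Prod>x\<in>X \<inter> Y. f x) = 1"
    by (simp add: assms(3) flip: prod.distrib)
  have "(\<Prod>x\<in>(X - Y) \<union> (Y - X). f x) = (\<Prod>x\<in>X - Y. f x) * (\<Prod>x\<in>Y - X. f x)"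
    using assms by (intro prod.union_disjoint) auto
  also have "\<dots> = (\<Prod>x\<in>X. f x) * (\<Prod>x\<in>Y. f x)"
    unfolding split_X split_Y using common_sq by (simp add: algebra_simps)
  finally show ?thesis .
qed

lemma blade_sign_sym_diff_right:
  fixes A B C :: "'n::{finite,linorder} set"
  shows "blade_sign A ((B - C) \<union> (C - B)) = blade_sign A B * blade_sign A C"
  unfolding blade_sign_prod
  by (simp add: prod_sym_diff pair_sign_def prod.distrib)

lemma blade_sign_sym_diff_left:
  fixes A B C :: "'n::{finite,linorder} set"
  shows "blade_sign ((A - B) \<union> (B - A)) C = blade_sign A C * blade_sign B C"
  unfolding blade_sign_prod
  by (subst (1 2 3) prod.swap) (simp add: prod_sym_diff pair_sign_def prod.distrib)

(* Associativity on basis blades reduces to the multiplicativity of blade_sign. *)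
lemma cl_axis_assoc:
  "(axis A (1::real) \<odot> axis B 1) \<odot> axis C 1 = axis A 1 \<odot> (axis B 1 \<odot> axis C 1)"
proof -
  have "(A - B \<union> (B - A)) - C \<union> (C - (A - B \<union> (B - A)))
      = A - (B - C \<union> (C - B)) \<union> ((B - C \<union> (C - B)) - A)" by auto
  then show ?thesis
    by (simp add: cl_axis_mult blade_sign_sym_diff_left blade_sign_sym_diff_right mult_ac)
qed

lemma cl_assoc: "(x \<odot> y) \<odot> z = x \<odot> (y \<odot> z)"
proof -
  have "((\<Sum>A\<in>UNIV. (x $ A) *\<^sub>R axis A (1::real)) \<odot> (\<Sum>B\<in>UNIV. (y $ B) *\<^sub>R axis B 1))
          \<odot> (\<Sum>C\<in>UNIV. (z $ C) *\<^sub>R axis C 1)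
      = (\<Sum>A\<in>UNIV. (x $ A) *\<^sub>R axis A 1)
          \<odot> ((\<Sum>B\<in>UNIV. (y $ B) *\<^sub>R axis B 1) \<odot> (\<Sum>C\<in>UNIV. (z $ C) *\<^sub>R axis C 1))"
    by (simp add: cl.sum_left cl.sum_right cl.scaleR_left cl.scaleR_right cl_axis_assoc)
  then show ?thesis by (simp only: basis_expansion_real)
qed

definition cl_one :: "'n::{finite,linorder} cl" where
  "cl_one = axis {} 1"

lemma cl_one_left: "cl_one \<odot> x = x"
proof -
  have "cl_one \<odot> (\<Sum>A\<in>UNIV. (x $ A) *\<^sub>R axis A (1::real)) = (\<Sum>A\<in>UNIV. (x $ A) *\<^sub>R axis A 1)"
    by (simp add: cl_one_def cl.sum_right cl.scaleR_right cl_axis_mult blade_sign_prod)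
  then show ?thesis by (simp only: basis_expansion_real)
qed

lemma cl_one_right: "x \<odot> cl_one = x"
proof -
  have "(\<Sum>A\<in>UNIV. (x $ A) *\<^sub>R axis A (1::real)) \<odot> cl_one = (\<Sum>A\<in>UNIV. (x $ A) *\<^sub>R axis A 1)"
    by (simp add: cl_one_def cl.sum_left cl.scaleR_left cl_axis_mult blade_sign_prod)
  then show ?thesis by (simp only: basis_expansion_real)
qed

lemma cl_e_anticomm:
  "cl_e i \<odot> cl_e j + cl_e j \<odot> cl_e i = (if i = j then -2 else 0) *\<^sub>R (cl_one :: 'n::{finite,linorder} cl)"
proof (cases "i = j")
  case True
  have "cl_e j \<odot> cl_e j = axis {} (-1)"
    by (simp add: cl_e_def cl_axis_mult blade_sign_prod pair_sign_def)
  then show ?thesis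
    using True by (simp add: cl_one_def vec_eq_iff axis_def)
next
  case False
  define S where "S = {i} - {j} \<union> ({j} - {i})"
  have "cl_e i \<odot> cl_e j + cl_e j \<odot> cl_e i = axis S (pair_sign i j) + axis S (pair_sign j i)"
    unfolding cl_e_def cl_axis_mult S_def by (simp add: blade_sign_prod Un_commute)
  also have "\<dots> = axis S (pair_sign i j + pair_sign j i)"
    by (simp add: vec_eq_iff axis_def)
  moreover have "pair_sign i j + pair_sign j i = 0"
    using False by (auto simp: pair_sign_def)
  ultimately show ?thesis
    using False by simp
qed

lemma vec_cl_linear: "linear vec_cl"
  by (rule linearI) (simp_all add: vec_cl_def scaleR_add_left sum.distrib scaleR_sum_right)

lemma vec_cl_axis: "vec_cl (axis j 1) = cl_e j"
  by (simp add: vec_cl_def axis_def if_distrib[where f="\<lambda>x. x *\<^sub>R _"] cong: if_cong)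

lemma vec_cl_anticomm:
  "vec_cl a \<odot> vec_cl b + vec_cl b \<odot> vec_cl a = (-2 * inner a b) *\<^sub>R cl_one"
proof -
  have "vec_cl a \<odot> vec_cl b + vec_cl b \<odot> vec_cl a
      = (\<Sum>i\<in>UNIV. \<Sum>j\<in>UNIV. (a $ i * b $ j) *\<^sub>R (cl_e i \<odot> cl_e j + cl_e j \<odot> cl_e i))"
    unfolding vec_cl_def cl.sum_left cl.sum_right cl.scaleR_left cl.scaleR_right
      scaleR_sum_right scaleR_scaleR scaleR_add_right sum.distrib
    by (subst (2) sum.swap) (simp add: mult.commute)
  also have "\<dots> = (\<Sum>i\<in>UNIV. \<Sum>j\<in>UNIV. (if i = j then -2 * (a $ i * b $ j) else 0) *\<^sub>R cl_one)"
    unfolding cl_e_anticomm by (intro sum.cong refl) simp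
  also have "\<dots> = (\<Sum>i\<in>UNIV. (-2 * (a $ i * b $ i)) *\<^sub>R cl_one)"
    by (simp add: if_distrib[where f="\<lambda>x. x *\<^sub>R cl_one"] cong: if_cong)
  also have "\<dots> = (-2 * inner a b) *\<^sub>R cl_one"
    by (simp add: inner_vec_def scaleR_sum_left sum_distrib_left)
  finally show ?thesis .
qed

lemma vec_cl_square: "vec_cl a \<odot> vec_cl a = (- (norm a ^ 2)) *\<^sub>R cl_one"
proof -
  have "(2::real) *\<^sub>R (vec_cl a \<odot> vec_cl a) = 2 *\<^sub>R ((- (norm a ^ 2)) *\<^sub>R cl_one)"
    using vec_cl_anticomm[of a a] by (simp add: power2_norm_eq_inner scaleR_2)
  then show ?thesis by (simp only: scaleR_cancel_left) simp
qed

lemma cl_vec_vec_cl: "cl_vec (vec_cl z) = z"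
  by (simp add: cl_vec_def vec_cl_def cl_e_def vec_eq_iff sum_component axis_def
      if_distrib[where f="\<lambda>x. _ * x"] cong: if_cong)

section \<open>Reflections\<close>

(* Reflection in the hyperplane orthogonal to y (the identity when y = 0). *)
definition reflect :: "real ^ 'n::{finite,linorder} \<Rightarrow> real ^ 'n::{finite,linorder} \<Rightarrow> real ^ 'n::{finite,linorder}" where
  "reflect y z = z - (2 * inner z y / norm y ^ 2) *\<^sub>R y"

lemma vec_cl_sandwich:
  "vec_cl y \<odot> vec_cl z \<odot> vec_cl y = (norm y ^ 2) *\<^sub>R vec_cl (reflect y z)"
proof -
  have swap: "vec_cl y \<odot> vec_cl z = (-2 * inner y z) *\<^sub>R cl_one - vec_cl z \<odot> vec_cl y"
    using vec_cl_anticomm[of y z] by (simp add: eq_diff_eq)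
  have "vec_cl y \<odot> vec_cl z \<odot> vec_cl y = (norm y ^ 2) *\<^sub>R vec_cl z - (2 * inner y z) *\<^sub>R vec_cl y"
    unfolding swap cl.diff_left cl.scaleR_left cl_one_left cl_assoc vec_cl_square cl.scaleR_right
      cl_one_right by simp
  then show ?thesis
    by (cases "y = 0") (simp_all add: reflect_def linear_diff[OF vec_cl_linear]
        linear_cmul[OF vec_cl_linear] inner_commute scaleR_diff_right)
qed

lemma cl_vec_sandwich:
  assumes "y \<noteq> 0"
  shows "cl_vec (inverse (norm y ^ 2) *\<^sub>R (vec_cl y \<odot> vec_cl z \<odot> vec_cl y)) = reflect y z"
  using assms by (simp add: vec_cl_sandwich cl_vec_vec_cl)

lemma reflect_intertwine_left:
  "vec_cl (reflect y z) \<odot> vec_cl y = - (vec_cl y \<odot> vec_cl z)"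
proof (cases "y = 0")
  case False
  have swap: "vec_cl y \<odot> vec_cl z = (-2 * inner z y) *\<^sub>R cl_one - vec_cl z \<odot> vec_cl y"
    using vec_cl_anticomm[of y z] by (simp add: eq_diff_eq inner_commute)
  show ?thesis
    using False unfolding reflect_def swap
    by (simp add: linear_diff[OF vec_cl_linear] linear_cmul[OF vec_cl_linear] cl.diff_left
        cl.scaleR_left vec_cl_square)
qed (simp add: linear_0[OF vec_cl_linear] cl.zero_left cl.zero_right)

lemma reflect_intertwine_right:
  "vec_cl y \<odot> vec_cl (reflect y z) = - (vec_cl z \<odot> vec_cl y)"
proof (cases "y = 0")
  case False
  have swap: "vec_cl z \<odot> vec_cl y = (-2 * inner z y) *\<^sub>R cl_one - vec_cl y \<odot> vec_cl z"
    using vec_cl_anticomm[of z y] by (simp add: eq_diff_eq)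
  show ?thesis
    using False unfolding reflect_def swap
    by (simp add: linear_diff[OF vec_cl_linear] linear_cmul[OF vec_cl_linear] cl.diff_right
        cl.scaleR_right vec_cl_square)
qed (simp add: linear_0[OF vec_cl_linear] cl.zero_left cl.zero_right)

lemma reflect_bounded_linear: "bounded_linear (reflect y)"
proof -
  have "reflect y = (\<lambda>z. z - inner z ((2 / norm y ^ 2) *\<^sub>R y) *\<^sub>R y)"
    by (simp add: fun_eq_iff reflect_def)
  then show ?thesis
    by (simp only:) (intro bounded_linear_intros bounded_linear_inner_left)
qed

(* The matrix of a reflection is symmetric; this lets the Dirac operator pass through it. *)
lemma reflect_axis_symmetric: "reflect y (axis j 1) $ i = reflect y (axis i 1) $ j"
proof -
  have "inner (reflect y a) b = inner a (reflect y b)" for a b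
    by (simp add: reflect_def inner_diff_left inner_diff_right algebra_simps inner_commute)
  then show ?thesis
    by (metis cart_eq_inner_axis inner_commute)
qed

lemma pd_has_derivative:
  assumes "(g has_derivative L) (at u)"
  shows "pd j g u = L (axis j 1)"
proof -
  have line: "((\<lambda>t::real. u + t *\<^sub>R axis j 1) has_derivative (\<lambda>t. t *\<^sub>R axis j 1)) (at 0)"
    by (auto intro!: derivative_eq_intros)
  have "((\<lambda>t. g (u + t *\<^sub>R axis j 1)) has_derivative (\<lambda>t. L (t *\<^sub>R axis j 1))) (at 0)"
    using diff_chain_at[OF line, of g L] assms by (simp add: o_def)
  then have "((\<lambda>t. g (u + t *\<^sub>R axis j 1)) has_vector_derivative L (axis j 1)) (at 0)"
    unfolding has_vector_derivative_def
    using linear_scale[OF has_derivative_linear[OF assms]] by simp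
  then show ?thesis unfolding pd_def by (rule vector_derivative_at)
qed

lemma dirac_has_derivative:
  assumes "(g has_derivative L) (at u)"
  shows "dirac g u = (\<Sum>j\<in>UNIV. cl_e j \<odot> L (axis j 1))"
  unfolding dirac_def pd_has_derivative[OF assms] ..

lemma linear_axis_expansion:
  fixes L :: "real ^ 'n \<Rightarrow> 'b::real_vector"
  assumes "linear L"
  shows "L z = (\<Sum>i\<in>UNIV. (z $ i) *\<^sub>R L (axis i 1))"
proof -
  have "L z = L (\<Sum>i\<in>UNIV. (z $ i) *\<^sub>R axis i 1)"
    by (simp only: basis_expansion_real)
  then show ?thesis
    by (simp only: linear_sum[OF assms] linear_scale[OF assms])
qed

lemma hom_poly_differentiable:
  fixes g :: "real ^ 'n::{finite,linorder} \<Rightarrow> 'n cl"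
  assumes "hom_poly k g"
  shows "g differentiable (at u)"
proof -
  obtain c where g: "g = (\<lambda>u. \<Sum>\<alpha>\<in>{\<alpha>. sum \<alpha> UNIV = k}. (\<Prod>i\<in>UNIV. (u $ i) ^ (\<alpha> i)) *\<^sub>R c \<alpha>)"
    using assms unfolding hom_poly_def by blast
  show ?thesis
    unfolding differentiable_def g
    by (rule exI, rule has_derivative_sum, rule has_derivative_scaleR, rule has_derivative_prod,
        rule has_derivative_power, rule bounded_linear_imp_has_derivative[OF bounded_linear_vec_nth],
        rule has_derivative_const)
qed

section \<open>Reflections intertwine D and P_k\<close>

lemma dirac_reflect:
  fixes g :: "real ^ 'n::{finite,linorder} \<Rightarrow> 'n cl"
  assumes "g differentiable (at (reflect y w))"
  shows "dirac (\<lambda>v. vec_cl (a *\<^sub>R y) \<odot> g (reflect y v)) w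
       = - (vec_cl (a *\<^sub>R y) \<odot> dirac g (reflect y w))"
proof -
  define c where "c = vec_cl (a *\<^sub>R y)"
  obtain L where L: "(g has_derivative L) (at (reflect y w))"
    using assms unfolding differentiable_def by blast
  have "((\<lambda>v. g (reflect y v)) has_derivative (\<lambda>z. L (reflect y z))) (at w)"
    using diff_chain_at[OF bounded_linear_imp_has_derivative[OF reflect_bounded_linear] L]
    by (simp add: o_def)
  then have "((\<lambda>v. c \<odot> g (reflect y v)) has_derivative (\<lambda>z. c \<odot> L (reflect y z))) (at w)"
    by (rule bounded_linear.has_derivative[OF cl.bounded_linear_right])
  then have "dirac (\<lambda>v. c \<odot> g (reflect y v)) w
      = (\<Sum>j\<in>UNIV. cl_e j \<odot> (c \<odot> L (reflect y (axis j 1))))"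
    by (rule dirac_has_derivative)
  also have "\<dots> = (\<Sum>j\<in>UNIV. \<Sum>i\<in>UNIV. (reflect y (axis i 1) $ j) *\<^sub>R (cl_e j \<odot> (c \<odot> L (axis i 1))))"
  proof (rule sum.cong[OF refl])
    fix j
    have "L (reflect y (axis j 1)) = (\<Sum>i\<in>UNIV. (reflect y (axis j 1) $ i) *\<^sub>R L (axis i 1))"
      by (rule linear_axis_expansion[OF has_derivative_linear[OF L]])
    then show "cl_e j \<odot> (c \<odot> L (reflect y (axis j 1)))
        = (\<Sum>i\<in>UNIV. (reflect y (axis i 1) $ j) *\<^sub>R (cl_e j \<odot> (c \<odot> L (axis i 1))))"
      by (simp add: cl.sum_right cl.scaleR_right reflect_axis_symmetric)
  qed
  also have "\<dots> = (\<Sum>i\<in>UNIV. vec_cl (reflect y (axis i 1)) \<odot> c \<odot> L (axis i 1))"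
    by (subst sum.swap) (simp add: vec_cl_def cl.sum_left cl.scaleR_left cl_assoc)
  also have "\<dots> = - (\<Sum>i\<in>UNIV. c \<odot> cl_e i \<odot> L (axis i 1))"
    by (simp add: c_def reflect_intertwine_left linear_cmul[OF vec_cl_linear] vec_cl_axis
        cl.scaleR_left cl.scaleR_right cl.minus_left sum_negf)
  also have "\<dots> = - (c \<odot> dirac g (reflect y w))"
    by (simp add: dirac_has_derivative[OF L] cl.sum_right cl_assoc)
  finally show ?thesis unfolding c_def .
qed

lemma Pk_reflect:
  fixes g :: "real ^ 'n::{finite,linorder} \<Rightarrow> 'n cl"
  assumes "g differentiable (at (reflect y w))"
  shows "Pk k (\<lambda>v. vec_cl (a *\<^sub>R y) \<odot> g (reflect y v)) w
       = vec_cl (a *\<^sub>R y) \<odot> Pk k g (reflect y w)"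
proof -
  define c where "c = vec_cl (a *\<^sub>R y)"
  have w_c: "vec_cl w \<odot> c = - (c \<odot> vec_cl (reflect y w))"
    using reflect_intertwine_right[of y w]
    by (simp add: c_def linear_cmul[OF vec_cl_linear] cl.scaleR_left cl.scaleR_right)
  have "vec_cl w \<odot> dirac (\<lambda>v. c \<odot> g (reflect y v)) w
      = - (vec_cl w \<odot> c \<odot> dirac g (reflect y w))"
    unfolding c_def dirac_reflect[OF assms] by (simp add: cl.minus_right cl_assoc)
  also have "\<dots> = c \<odot> (vec_cl (reflect y w) \<odot> dirac g (reflect y w))"
    unfolding w_c by (simp add: cl.minus_left cl_assoc)
  finally show ?thesis
    unfolding Pk_def c_def by (simp add: cl.add_right cl.scaleR_right)
qed

theorem lemma2:
  fixes U :: "(real ^ 'n::{finite,linorder}) set"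
    and f :: "real ^ ('n::{finite,linorder}) \<Rightarrow> real ^ ('n::{finite,linorder}) \<Rightarrow> 'n cl"
    and k :: nat
  assumes "k \<ge> 1"
    and "open U" and "connected U" and "U \<noteq> {}"
    and "\<forall>x\<in>U. harmonic_hom_poly k (f x)"
    and "y \<noteq> 0" and "vinv y \<in> U"
  shows "Pk k (\<lambda>w'. vec_cl (inverse (norm y ^ CARD('n)) *\<^sub>R y) \<odot>
              f (vinv y) (cl_vec (inverse (norm y ^ 2) *\<^sub>R (vec_cl y \<odot> vec_cl w' \<odot> vec_cl y)))) w
       = vec_cl (inverse (norm y ^ CARD('n)) *\<^sub>R y) \<odot>
           Pk k (f (vinv y)) (cl_vec (inverse (norm y ^ 2) *\<^sub>R (vec_cl y \<odot> vec_cl w \<odot> vec_cl y)))"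
proof -
  have "hom_poly k (f (vinv y))"
    using assms(5,7) unfolding harmonic_hom_poly_def by blast
  then have "f (vinv y) differentiable (at (reflect y w))"
    by (rule hom_poly_differentiable)
  then show ?thesis
    unfolding cl_vec_sandwich[OF assms(6)] by (rule Pk_reflect)
qed

end
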